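(* Let $n\ge 1$ and let $x:\mathbb{N}\to\mathbb{R}$ satisfy $x(t+n)=a_1x(t+n-1)+\dots+a_nx(t)$ for all $t\in\mathbb{N}$, with $a_1,\dots,a_n\in\mathbb{R}$, and assume $x$ satisfies no linear difference equation $x(t+m)=c_1x(t+m-1)+\dots+c_mx(t)$ ($\forall t$) of order $m<n$. Let $X\in\mathbb{R}(z)$ be the rational function whose expansion at infinity is $\sum_{t\ge0}x(t)z^{-(t+1)}$. Then $a_1,\dots,a_n$ are linearly identifiable without determining the initial conditions: the $(n+1)\times(n+1)$ matrix $\mathcal{N}$ whose $\mu$-th row ($0\le\mu\le n$) is $$\Big(\tfrac{d^{n+\mu}}{dz^{n+\mu}}(z^nX),\ \tfrac{d^{n+\mu}}{dz^{n+\mu}}(z^{n-1}X),\ \dots,\ \tfrac{d^{n+\mu}}{dz^{n+\mu}}X\Big)$$ has rank $n$, and $(\alpha_1,\dots,\alpha_n)=(a_1,\dots,a_n)$ is the unique solution in $\mathbb{R}(z)^n$ of the linear system $$\frac{d^{n+\mu}}{dz^{n+\mu}}(z^nX)=\sum_{i=1}^n\alpha_i\,\frac{d^{n+\mu}}{dz^{n+\mu}}(z^{n-i}X),\qquad \mu=0,1,\dots,n.$$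
   Context: $\mathbb{R}(z)$ is the field of real rational functions with derivation $d/dz$. Here $Q(z)X(z)$, with $Q(z)=z^n-a_1z^{n-1}-\dots-a_n$, is a polynomial of degree at most $n-1$ encoding the initial conditions; derivatives of order $\ge n$ eliminate it. *)

theory Defs
  imports Complex_Main "HOL-Computational_Algebra.Polynomial"
    "HOL-Computational_Algebra.Normalized_Fraction" "HOL-Computational_Algebra.Field_as_Ring" "HOL-Computational_Algebra.Polynomial_Factorial"
    "Jordan_Normal_Form.DL_Rank"
begin

text \<open>The field of real rational functions R(z) is represented by the fraction
  field of real polynomials, type real poly fract.\<close>

definition rderiv :: "real poly fract \<Rightarrow> real poly fract" where
  "rderiv r = (case quot_of_fract r of (p, q) \<Rightarrow>
      Fract (pderiv p * q - p * pderiv q) (q * q))"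

text \<open>Evaluation of a rational function at a real point (value of p/q
  in canonical form; meaningful away from the poles).\<close>
definition reval :: "real poly fract \<Rightarrow> real \<Rightarrow> real" where
  "reval r z = (case quot_of_fract r of (p, q) \<Rightarrow> poly p z / poly q z)"

definition rpoly :: "real poly \<Rightarrow> real poly fract" where
  "rpoly p = Fract p 1"

definition rconst :: "real \<Rightarrow> real poly fract" where
  "rconst c = rpoly [:c:]"

definition rz :: "real poly fract" where
  "rz = rpoly [:0, 1:]"

end

theory Submission
  imports Defs
begin

text \<open>The characteristic polynomial \<open>Q(z) = z^n - a\<^sub>1 z^(n-1) - \<dots> - a\<^sub>n\<close> annihilates \<open>x\<close> under the
  shift, so \<open>Q X\<close> is a polynomial of degree below \<open>n\<close>, and \<open>n\<close>-fold differentiation kills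
  \<open>z^n X - \<Sum> a\<^sub>i z^(n-i) X\<close>: the coefficients \<open>a\<^sub>i\<close> solve every equation of the system. Minimality of the
  recurrence means that \<open>C X\<close> is never a polynomial for a nonzero \<open>C\<close> of degree below \<open>n\<close>, i.e. the
  functions \<open>D\<^sup>n (z^(n-i) X)\<close> are linearly independent over the constants. A Wronskian argument in
  the differential field \<open>\<real>(z)\<close> upgrades this to independence over \<open>\<real>(z)\<close> of their first \<open>n\<close>
  derivatives, which gives both uniqueness of the solution and rank \<open>n\<close> of the matrix.\<close>

section \<open>The derivation on \<open>\<real>(z)\<close>\<close>

lemma rpoly_eq_to_fract: "rpoly = to_fract"
  by (simp add: fun_eq_iff rpoly_def to_fract_def)

lemma rconst_eq_to_fract: "rconst c = to_fract [:c:]"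
  by (simp add: rconst_def rpoly_eq_to_fract)

lemma to_fract_power: "to_fract (p ^ k) = to_fract p ^ k"
  by (induction k) simp_all

lemma rz_power: "rz ^ k = to_fract (monom 1 k)"
  by (simp add: rz_def rpoly_eq_to_fract to_fract_power[symmetric] monom_altdef)

lemma rconst_mult_rz_power: "rconst c * rz ^ k = to_fract (monom c k)"
  by (simp add: rz_power rconst_eq_to_fract to_fract_mult[symmetric] monom_altdef
           del: to_fract_mult)

lemma rconst_1 [simp]: "rconst 1 = 1"
  by (simp add: rconst_eq_to_fract one_pCons[symmetric])

lemma rderiv_Fract:
  assumes "q \<noteq> 0"
  shows "rderiv (Fract p q) = Fract (pderiv p * q - p * pderiv q) (q * q)"
proof -
  obtain p' q' where pq': "quot_of_fract (Fract p q) = (p', q')"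
    by (cases "quot_of_fract (Fract p q)")
  have "q' \<noteq> 0"
    using snd_quot_of_fract_nonzero[of "Fract p q"] pq' by simp
  have same: "p' * q = p * q'"
    using Fract_quot_of_fract[of "Fract p q"] pq' \<open>q' \<noteq> 0\<close> assms by (simp add: eq_fract)
  have same': "pderiv p' * q + p' * pderiv q = pderiv p * q' + p * pderiv q'"
    using arg_cong[OF same, of pderiv] by (simp add: pderiv_mult algebra_simps)
  \<comment> \<open>the derivative of the cross-multiplied identity makes the two quotient-rule numerators agree\<close>
  have "(pderiv p' * q' - p' * pderiv q') * (q * q) - (pderiv p * q - p * pderiv q) * (q' * q')
      = q * q' * (pderiv p' * q + p' * pderiv q - (pderiv p * q' + p * pderiv q'))
        - (pderiv q' * q + pderiv q * q') * (p' * q - p * q')"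
    by (simp add: algebra_simps)
  also have "\<dots> = 0"
    using same same' by simp
  finally show ?thesis
    unfolding rderiv_def pq' using assms \<open>q' \<noteq> 0\<close> by (simp add: eq_fract)
qed

lemma rderiv_to_fract [simp]: "rderiv (to_fract p) = to_fract (pderiv p)"
  by (simp add: to_fract_def rderiv_Fract)

lemma rderiv_0 [simp]: "rderiv 0 = 0"
  using rderiv_to_fract[of 0] by simp

lemma rderiv_1 [simp]: "rderiv 1 = 0"
  using rderiv_to_fract[of 1] by simp

lemma rderiv_rconst [simp]: "rderiv (rconst c) = 0"
  by (simp add: rconst_eq_to_fract pderiv_pCons)

lemma rderiv_add: "rderiv (r + s) = rderiv r + rderiv s"
  by (cases r; cases s) (simp add: rderiv_Fract pderiv_mult pderiv_add algebra_simps)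

lemma rderiv_mult: "rderiv (r * s) = rderiv r * s + r * rderiv s"
  by (cases r; cases s) (simp add: rderiv_Fract eq_fract pderiv_mult pderiv_add algebra_simps)

lemma rderiv_uminus: "rderiv (- r) = - rderiv r"
  using rderiv_add[of r "- r"] by (simp add: eq_neg_iff_add_eq_0)

lemma rderiv_diff: "rderiv (r - s) = rderiv r - rderiv s"
  using rderiv_add[of r "- s"] by (simp add: rderiv_uminus)

lemma rderiv_sum: "rderiv (\<Sum>i\<in>A. f i) = (\<Sum>i\<in>A. rderiv (f i))"
  by (induction A rule: infinite_finite_induct) (simp_all add: rderiv_add)

lemma rderiv_rconst_mult: "rderiv (rconst c * r) = rconst c * rderiv r"
  by (simp add: rderiv_mult)

lemma funpow_rderiv_diff: "(rderiv ^^ k) (r - s) = (rderiv ^^ k) r - (rderiv ^^ k) s"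
  by (induction k) (simp_all add: rderiv_diff)

lemma funpow_rderiv_sum: "(rderiv ^^ k) (\<Sum>i\<in>A. f i) = (\<Sum>i\<in>A. (rderiv ^^ k) (f i))"
  by (induction k) (simp_all add: rderiv_sum)

lemma funpow_rderiv_rconst_mult: "(rderiv ^^ k) (rconst c * r) = rconst c * (rderiv ^^ k) r"
  by (induction k) (simp_all add: rderiv_rconst_mult)

lemma funpow_rderiv_to_fract: "(rderiv ^^ k) (to_fract p) = to_fract ((pderiv ^^ k) p)"
  by (induction k) simp_all

lemma funpow_rderiv_to_fract_eq_0:
  assumes "degree p < k"
  shows "(rderiv ^^ k) (to_fract p) = 0"
proof -
  have "(pderiv ^^ k) p = 0"
    using assms by (intro poly_eqI) (simp add: coeff_higher_pderiv coeff_eq_0)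
  then show ?thesis
    by (simp add: funpow_rderiv_to_fract)
qed

lemma rderiv_eq_to_fract_imp_poly:
  assumes "rderiv r = to_fract P"
  obtains p where "r = to_fract p"
proof -
  obtain p q where pq: "quot_of_fract r = (p, q)"
    by (cases "quot_of_fract r")
  have "q \<noteq> 0" "coprime p q" "r = Fract p q"
    using snd_quot_of_fract_nonzero[of r] coprime_quot_of_fract[of r] Fract_quot_of_fract[of r] pq
    by simp_all
  then have "pderiv p * q - p * pderiv q = P * (q * q)"
    using assms by (simp add: rderiv_Fract to_fract_def eq_fract)
  then have "p * pderiv q = q * (pderiv p - P * q)"
    by (simp add: algebra_simps)
  then have "q dvd pderiv q"
    using \<open>coprime p q\<close> by (metis coprime_commute coprime_dvd_mult_right_iff dvd_triv_left)
  then have "degree q = 0"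
    using not_dvd_pderiv by blast
  then obtain c where "q = [:c:]" "c \<noteq> 0"
    using \<open>q \<noteq> 0\<close> by (metis degree_eq_zeroE pCons_0_0)
  then have "r = to_fract (Polynomial.smult (1 / c) p)"
    using \<open>r = Fract p q\<close> by (simp add: to_fract_def eq_fract)
  then show ?thesis
    by (rule that)
qed

lemma rderiv_eq_0_iff: "rderiv r = 0 \<longleftrightarrow> (\<exists>c. r = rconst c)"
proof
  assume "rderiv r = 0"
  then obtain p where p: "r = to_fract p"
    by (metis rderiv_eq_to_fract_imp_poly to_fract_0)
  then have "degree p = 0"
    using \<open>rderiv r = 0\<close> by (simp add: pderiv_eq_0_iff)
  then show "\<exists>c. r = rconst c"
    using p by (metis degree_eq_zeroE rconst_eq_to_fract)
qed auto

lemma funpow_rderiv_eq_0_imp_poly: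
  assumes "(rderiv ^^ k) r = 0"
  obtains p where "r = to_fract p"
  using assms
proof (induction k arbitrary: r thesis)
  case 0
  then show ?case
    by (metis funpow_0 to_fract_0)
next
  case (Suc k)
  then obtain P where "rderiv r = to_fract P"
    by (metis funpow_Suc_right o_apply)
  then show ?case
    using Suc.prems(1) by (rule rderiv_eq_to_fract_imp_poly)
qed

lemma wronskian_indep:
  fixes g \<beta> :: "nat \<Rightarrow> real poly fract"
  assumes indep: "\<forall>c. (\<Sum>i=1..m. rconst (c i) * g i) = 0 \<longrightarrow> (\<forall>i\<in>{1..m}. c i = 0)"
    and rows: "\<And>\<mu>. \<mu> < m \<Longrightarrow> (\<Sum>i=1..m. \<beta> i * (rderiv ^^ \<mu>) (g i)) = 0"
  shows "\<forall>i\<in>{1..m}. \<beta> i = 0"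
  using indep rows
proof (induction m arbitrary: \<beta>)
  case 0
  then show ?case by simp
next
  case (Suc m)
  have indep_m: "\<forall>c. (\<Sum>i=1..m. rconst (c i) * g i) = 0 \<longrightarrow> (\<forall>i\<in>{1..m}. c i = 0)"
  proof (intro allI impI)
    fix c
    assume sum_0: "(\<Sum>i=1..m. rconst (c i) * g i) = 0"
    have "(\<Sum>i=1..Suc m. rconst ((c(Suc m := 0)) i) * g i) = (\<Sum>i=1..m. rconst (c i) * g i)"
      by (simp add: sum.cl_ivl_Suc rconst_eq_to_fract)
    then have zero: "\<forall>i\<in>{1..Suc m}. (c(Suc m := 0)) i = 0"
      using Suc.prems(1) sum_0 by (simp del: fun_upd_apply)
    show "\<forall>i\<in>{1..m}. c i = 0"
    proof
      fix i :: nat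
      assume "i \<in> {1..m}"
      then show "c i = 0"
        using zero[rule_format, of i] by simp
    qed
  qed
  show ?case
  proof (cases "\<beta> (Suc m) = 0")
    case True
    have "(\<Sum>i=1..m. \<beta> i * (rderiv ^^ \<mu>) (g i)) = 0" if "\<mu> < m" for \<mu>
      using Suc.prems(2)[of \<mu>] that True by simp
    then have "\<forall>i\<in>{1..m}. \<beta> i = 0"
      by (rule Suc.IH[OF indep_m])
    then show ?thesis
      using True by (auto simp: le_Suc_eq)
  next
    case False
    define \<gamma> where "\<gamma> i = \<beta> i / \<beta> (Suc m)" for i
    have \<gamma>_last: "\<gamma> (Suc m) = 1"
      using False by (simp add: \<gamma>_def)
    have \<gamma>_rows: "(\<Sum>i=1..Suc m. \<gamma> i * (rderiv ^^ \<mu>) (g i)) = 0" if "\<mu> < Suc m" for \<mu>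
      using Suc.prems(2)[OF that] by (simp add: \<gamma>_def flip: sum_divide_distrib)
    \<comment> \<open>differentiating row \<open>\<mu>\<close> and subtracting row \<open>\<mu> + 1\<close> leaves a system of size \<open>m\<close> for the \<open>\<gamma>' i\<close>\<close>
    have "(\<Sum>i=1..m. rderiv (\<gamma> i) * (rderiv ^^ \<mu>) (g i)) = 0" if "\<mu> < m" for \<mu>
    proof -
      have "0 = rderiv (\<Sum>i=1..Suc m. \<gamma> i * (rderiv ^^ \<mu>) (g i))"
        using \<gamma>_rows[of \<mu>] that by simp
      also have "\<dots> = (\<Sum>i=1..Suc m. rderiv (\<gamma> i) * (rderiv ^^ \<mu>) (g i))
          + (\<Sum>i=1..Suc m. \<gamma> i * (rderiv ^^ Suc \<mu>) (g i))"
        by (simp only: rderiv_sum rderiv_mult sum.distrib funpow.simps o_apply)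
      also have "(\<Sum>i=1..Suc m. \<gamma> i * (rderiv ^^ Suc \<mu>) (g i)) = 0"
        using \<gamma>_rows[of "Suc \<mu>"] that by simp
      finally have "(\<Sum>i=1..Suc m. rderiv (\<gamma> i) * (rderiv ^^ \<mu>) (g i)) = 0"
        by simp
      then show ?thesis
        using \<gamma>_last by simp
    qed
    then have "\<forall>i\<in>{1..m}. rderiv (\<gamma> i) = 0"
      by (rule Suc.IH[OF indep_m])
    then have "\<forall>i\<in>{1..m}. \<exists>c. \<gamma> i = rconst c"
      by (simp add: rderiv_eq_0_iff)
    then obtain c where c: "\<forall>i\<in>{1..m}. \<gamma> i = rconst (c i)"
      by (rule bchoice[elim_format]) blast
    define c' where "c' = c(Suc m := 1)"
    have "(\<Sum>i=1..Suc m. rconst (c' i) * g i) = (\<Sum>i=1..Suc m. \<gamma> i * (rderiv ^^ 0) (g i))"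
      using c \<gamma>_last by (intro sum.cong) (auto simp: c'_def le_Suc_eq)
    also have "\<dots> = 0"
      using \<gamma>_rows[of 0] by simp
    finally have "\<forall>i\<in>{1..Suc m}. c' i = 0"
      using Suc.prems(1) by blast
    then have "c' (Suc m) = 0"
      by simp
    then show ?thesis
      by (simp add: c'_def)
  qed
qed

section \<open>Linear recurrences and their generating series\<close>

definition char_poly :: "(nat \<Rightarrow> real) \<Rightarrow> nat \<Rightarrow> real poly" where
  "char_poly a n = monom 1 n - (\<Sum>i=1..n. monom (a i) (n - i))"

text \<open>\<open>poly_shift C y\<close> is \<open>C(E) y\<close> for the shift operator \<open>(E y) t = y (t + 1)\<close>, and
  \<open>init_poly C y\<close> is the polynomial part of \<open>C(z) Y(z)\<close> for \<open>Y(z) = \<Sum>t. y t / z ^ (t + 1)\<close>;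
  see \<open>sums_poly_shift\<close>.\<close>

definition poly_shift :: "real poly \<Rightarrow> (nat \<Rightarrow> real) \<Rightarrow> nat \<Rightarrow> real" where
  "poly_shift C y s = (\<Sum>j\<le>degree C. coeff C j * y (s + j))"

definition init_poly :: "real poly \<Rightarrow> (nat \<Rightarrow> real) \<Rightarrow> real poly" where
  "init_poly C y = (\<Sum>j\<le>degree C. Polynomial.smult (coeff C j) (\<Sum>t<j. monom (y t) (j - t - 1)))"

lemma sums_shift_gen_series:
  fixes z :: real
  assumes z: "z \<noteq> 0" and S: "(\<lambda>t. y t / z ^ (t + 1)) sums S"
  shows "(\<lambda>s. y (s + j) / z ^ (s + 1)) sums (z ^ j * S - (\<Sum>t<j. y t * z ^ (j - t - 1)))"
proof -
  have "(\<lambda>s. z ^ j * (y (s + j) / z ^ (s + j + 1))) sums (z ^ j * (S - (\<Sum>t<j. y t / z ^ (t + 1))))"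
    using sums_iff_shift[of "\<lambda>t. y t / z ^ (t + 1)" j] S by (intro sums_mult) simp
  moreover have "z ^ j * (y (s + j) / z ^ (s + j + 1)) = y (s + j) / z ^ (s + 1)" for s
    using z by (simp add: power_add field_simps)
  moreover have "z ^ j * (y t / z ^ (t + 1)) = y t * z ^ (j - t - 1)" if "t < j" for t
  proof -
    have "j = (j - t - 1) + (t + 1)"
      using that by simp
    then have "z ^ j = z ^ (j - t - 1) * z ^ (t + 1)"
      by (metis power_add)
    then show ?thesis
      using z by (simp add: field_simps)
  qed
  ultimately show ?thesis
    by (simp add: right_diff_distrib sum_distrib_left)
qed

lemma sums_poly_shift:
  fixes z :: real
  assumes "z \<noteq> 0" and "(\<lambda>t. y t / z ^ (t + 1)) sums S"
  shows "(\<lambda>s. poly_shift C y s / z ^ (s + 1)) sums (poly C z * S - poly (init_poly C y) z)"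
proof -
  have "(\<lambda>s. \<Sum>j\<le>degree C. coeff C j * (y (s + j) / z ^ (s + 1))) sums
        (\<Sum>j\<le>degree C. coeff C j * (z ^ j * S - (\<Sum>t<j. y t * z ^ (j - t - 1))))"
    by (intro sums_sum sums_mult sums_shift_gen_series assms)
  moreover have "(\<Sum>j\<le>degree C. coeff C j * (z ^ j * S - (\<Sum>t<j. y t * z ^ (j - t - 1))))
      = poly C z * S - poly (init_poly C y) z"
    by (simp add: init_poly_def poly_altdef[of C] poly_sum poly_monom right_diff_distrib sum_subtractf
        sum_distrib_left sum_distrib_right mult_ac)
  ultimately show ?thesis
    by (simp add: poly_shift_def sum_divide_distrib)
qed

lemma poly_mult_gen_series_eq_init_poly:
  fixes z :: real
  assumes "\<And>s. poly_shift C y s = 0" and "z \<noteq> 0" and "(\<lambda>t. y t / z ^ (t + 1)) sums S"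
  shows "poly C z * S = poly (init_poly C y) z"
proof -
  have "(\<lambda>s. 0) sums (poly C z * S - poly (init_poly C y) z)"
    using sums_poly_shift[OF assms(2,3), of C] assms(1) by simp
  then show ?thesis
    using sums_unique2[OF _ sums_zero] by fastforce
qed

lemma coeff_char_poly:
  "coeff (char_poly a n) j = (if j = n then 1 else if j < n then - a (n - j) else 0)"
proof -
  have "(\<Sum>i=1..n. coeff (monom (a i) (n - i)) j) = (\<Sum>i=1..n. if i = n - j then a i else 0)"
    by (rule sum.cong) auto
  also have "\<dots> = (if j < n then a (n - j) else 0)"
    by (auto simp: sum.delta')
  finally show ?thesis
    unfolding char_poly_def coeff_diff coeff_sum by auto
qed

lemma degree_char_poly [simp]: "degree (char_poly a n) = n"
  by (rule antisym, rule degree_le) (auto simp: coeff_char_poly intro: le_degree)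

lemma char_poly_neq_0 [simp]: "char_poly a n \<noteq> 0"
  using coeff_char_poly[of a n n] by auto

lemma poly_shift_char_poly:
  "poly_shift (char_poly a n) y s = y (s + n) - (\<Sum>i=1..n. a i * y (s + n - i))"
proof -
  have "poly_shift (char_poly a n) y s = (\<Sum>j<n. coeff (char_poly a n) j * y (s + j)) + y (s + n)"
    by (simp add: poly_shift_def lessThan_Suc_atMost[symmetric] coeff_char_poly)
  also have "(\<Sum>j<n. coeff (char_poly a n) j * y (s + j)) = - (\<Sum>j<n. a (n - j) * y (s + j))"
    by (simp add: coeff_char_poly sum_negf[symmetric])
  also have "(\<Sum>j<n. a (n - j) * y (s + j)) = (\<Sum>i=1..n. a i * y (s + n - i))"
    by (rule sum.reindex_bij_witness[of _ "\<lambda>i. n - i" "\<lambda>j. n - j"]) auto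
  finally show ?thesis
    by simp
qed

lemma coeff_init_poly:
  "coeff (init_poly C y) d = (\<Sum>j\<le>degree C. coeff C j * (\<Sum>t<j. if j - t - 1 = d then y t else 0))"
  by (simp add: init_poly_def coeff_sum)

lemma degree_init_poly_less:
  assumes "0 < degree C"
  shows "degree (init_poly C y) < degree C"
proof -
  have "degree (init_poly C y) \<le> degree C - 1"
    by (rule degree_le) (auto simp: coeff_init_poly intro!: sum.neutral)
  then show ?thesis
    using assms by linarith
qed

lemma coeff_init_poly_top:
  assumes "0 < degree C"
  shows "coeff (init_poly C y) (degree C - 1) = lead_coeff C * y 0"
proof -
  let ?d = "degree C"
  have "(\<Sum>t<j. if j - t - 1 = ?d - 1 then y t else 0) = (if j = ?d then y 0 else 0)"
    if "j \<le> ?d" for j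
  proof (cases "j = ?d")
    case True
    then have "(\<Sum>t<j. if j - t - 1 = ?d - 1 then y t else 0) = (\<Sum>t<j. if t = 0 then y t else 0)"
      using assms by (intro sum.cong) auto
    then show ?thesis
      using True assms by simp
  qed (use that in \<open>auto intro!: sum.neutral\<close>)
  then have "coeff (init_poly C y) (?d - 1) = (\<Sum>j\<le>?d. coeff C j * (if j = ?d then y 0 else 0))"
    unfolding coeff_init_poly by (intro sum.cong) auto
  then show ?thesis
    by (simp add: if_distrib cong: if_cong)
qed

lemma poly_eq_0_if_infinite_roots:
  fixes p :: "real poly"
  assumes "infinite Z" and "\<And>z. z \<in> Z \<Longrightarrow> poly p z = 0"
  shows "p = 0"
  using assms poly_roots_finite[of p] finite_subset[of Z "{z. poly p z = 0}"] by blast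

lemma poly_shift_shift: "poly_shift C (\<lambda>s. y (s + k)) s = poly_shift C y (s + k)"
  by (simp add: poly_shift_def add_ac)

lemma poly_shift_commute: "poly_shift C (poly_shift D y) s = poly_shift D (poly_shift C y) s"
  unfolding poly_shift_def sum_distrib_left
  by (subst sum.swap) (simp add: mult_ac add_ac)

lemma gen_series_eq_0_imp_zero:
  assumes "infinite Z" and Z: "\<And>z. z \<in> Z \<Longrightarrow> z \<noteq> 0 \<and> (\<lambda>t. y t / z ^ (t + 1)) sums 0"
    and "0 < degree C" and annihilates: "\<And>s. poly_shift C y s = 0"
  shows "y k = 0"
proof (induction k rule: less_induct)
  case (less k)
  have "poly (init_poly C (\<lambda>s. y (s + k))) z = 0" if "z \<in> Z" for z
  proof -
    have "(\<lambda>t. y (t + k) / z ^ (t + 1)) sums 0"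
      using sums_shift_gen_series[of z y 0 k] Z[OF that] less.IH by simp
    then show ?thesis
      using poly_mult_gen_series_eq_init_poly[of C "\<lambda>s. y (s + k)" z 0] Z[OF that] annihilates
      by (simp add: poly_shift_shift)
  qed
  then have "init_poly C (\<lambda>s. y (s + k)) = 0"
    using poly_eq_0_if_infinite_roots \<open>infinite Z\<close> by blast
  then show ?case
    using coeff_init_poly_top[OF \<open>0 < degree C\<close>, of "\<lambda>s. y (s + k)"] \<open>0 < degree C\<close>
    by (cases "C = 0") auto
qed

lemma poly_shift_eq_0_imp_recurrence:
  assumes "C \<noteq> 0" and "\<And>t. poly_shift C y t = 0"
  shows "\<exists>c. \<forall>t. y (t + degree C) = (\<Sum>i=1..degree C. c i * y (t + degree C - i))"
proof -
  define m where "m = degree C"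
  define c where "c i = - coeff C (m - i) / lead_coeff C" for i
  have "y (t + m) = (\<Sum>i=1..m. c i * y (t + m - i))" for t
  proof -
    have "(\<Sum>j<m. coeff C j * y (t + j)) + lead_coeff C * y (t + m) = 0"
      using assms(2)[of t] by (simp add: poly_shift_def m_def lessThan_Suc_atMost[symmetric])
    then have "y (t + m) = - (\<Sum>j<m. coeff C j * y (t + j)) / lead_coeff C"
      using assms(1) by (simp add: field_simps)
    also have "\<dots> = (\<Sum>j<m. - coeff C j / lead_coeff C * y (t + j))"
      by (simp add: sum_divide_distrib sum_negf[symmetric])
    also have "\<dots> = (\<Sum>i=1..m. c i * y (t + m - i))"
      by (rule sum.reindex_bij_witness[of _ "\<lambda>i. m - i" "\<lambda>j. m - j"]) (auto simp: c_def)
    finally show ?thesis .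
  qed
  then show ?thesis
    unfolding m_def by blast
qed

section \<open>Matrices with a one-dimensional kernel\<close>

context vec_space
begin

lemma trivial_kernel_imp_lin_indpt_cols:
  assumes A: "A \<in> carrier_mat n k"
    and kernel: "\<And>v. v \<in> carrier_vec k \<Longrightarrow> A *\<^sub>v v = 0\<^sub>v n \<Longrightarrow> v = 0\<^sub>v k"
  shows "distinct (cols A)" and "lin_indpt (set (cols A))"
proof -
  show distinct: "distinct (cols A)"
  proof (rule ccontr)
    assume "\<not> distinct (cols A)"
    then obtain i j where ij: "i < k" "j < k" "i \<noteq> j" and "col A i = col A j"
      using A by (auto simp: distinct_conv_nth)
    then have same_col: "A $$ (r, i) = A $$ (r, j)" if "r < n" for r
      using A that by (metis carrier_matD col_def index_vec)
    define v :: "'a vec" where "v = unit_vec k i - unit_vec k j"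
    have "A *\<^sub>v v = 0\<^sub>v n"
      using A ij same_col
      by (intro eq_vecI) (auto simp: v_def scalar_prod_minus_distrib[where n = k])
    then have "v = 0\<^sub>v k"
      by (rule kernel[rotated]) (simp add: v_def)
    moreover have "v $ i = 1"
      using ij by (simp add: v_def)
    ultimately show False
      using ij by simp
  qed
  show "lin_indpt (set (cols A))"
    using lin_depE[OF A _ distinct] kernel by blast
qed

lemma rank_eq_if_kernel_line:
  assumes A: "A \<in> carrier_mat n n"
    and w: "w \<in> carrier_vec n" "w $ 0 \<noteq> 0" "A *\<^sub>v w = 0\<^sub>v n"
    and indep: "\<And>v. v \<in> carrier_vec n \<Longrightarrow> v $ 0 = 0 \<Longrightarrow> A *\<^sub>v v = 0\<^sub>v n \<Longrightarrow> v = 0\<^sub>v n"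
  shows "rank A = n - 1"
proof (cases n)
  case 0
  then show ?thesis
    using rank_le_nc[OF A] by simp
next
  case (Suc k)
  have "w \<noteq> 0\<^sub>v n"
    using w(2) Suc by auto
  then have "det A = 0"
    using det_0_iff_vec_prod_zero_field[OF A] w by blast
  then have upper: "rank A < n"
    by (rule det_zero_low_rank[OF A])
  \<comment> \<open>lower bound: the columns other than the first one have trivial kernel\<close>
  define B where "B = mat_of_cols n (tl (cols A))"
  have B: "B \<in> carrier_mat n k"
    using A Suc mat_of_cols_carrier(1)[of n "tl (cols A)"] by (simp add: B_def)
  have tl_cols: "set (tl (cols A)) \<subseteq> set (cols A)"
    by (cases "cols A") auto
  then have cols_B: "cols B = tl (cols A)"
    unfolding B_def using A cols_dim by (intro cols_mat_of_cols) blast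
  have B_mult: "B *\<^sub>v u = A *\<^sub>v vCons 0 u" if "u \<in> carrier_vec k" for u
  proof (rule eq_vecI)
    fix r
    assume "r < dim_vec (A *\<^sub>v vCons 0 u)"
    then show "(B *\<^sub>v u) $ r = (A *\<^sub>v vCons 0 u) $ r"
      using A B Suc that
      by (simp add: scalar_prod_def sum.atLeast0_lessThan_Suc_shift B_def mat_of_cols_index
          cols_nth nth_tl del: sum.op_ivl_Suc)
  qed (use A B in simp)
  have "u = 0\<^sub>v k" if "u \<in> carrier_vec k" "B *\<^sub>v u = 0\<^sub>v n" for u
  proof -
    have "vCons 0 u = 0\<^sub>v n"
      using indep[of "vCons 0 u"] that Suc B_mult by simp
    then have "u $ i = 0" if "i < k" for i
      using vec_index_vCons_Suc[of 0 u i] that Suc by simp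
    then show ?thesis
      using \<open>u \<in> carrier_vec k\<close> by (intro eq_vecI) auto
  qed
  then have "distinct (cols B)" "lin_indpt (set (cols B))"
    using trivial_kernel_imp_lin_indpt_cols[OF B] by blast+
  moreover have "set (cols B) \<subseteq> set (cols A)"
    unfolding cols_B by (rule tl_cols)
  ultimately have "card (set (cols B)) \<le> rank A"
    using rank_ge_card_indpt[OF A] by blast
  moreover have "card (set (cols B)) = k"
    using \<open>distinct (cols B)\<close> B by (simp add: distinct_card)
  ultimately show ?thesis
    using upper Suc by simp
qed

end

section \<open>The identifiability system\<close>

lemma expansion_set_exists:
  fixes p :: "real poly"
  assumes "\<exists>R. \<forall>z::real. R < \<bar>z\<bar> \<longrightarrow> (\<lambda>t. x t / z ^ (t + 1)) sums reval X z" and "p \<noteq> 0"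
  obtains Z where "infinite Z"
    and "\<And>z. z \<in> Z \<Longrightarrow> z \<noteq> 0 \<and> poly p z \<noteq> 0 \<and> (\<lambda>t. x t / z ^ (t + 1)) sums reval X z"
proof -
  obtain R where R: "\<And>z::real. R < \<bar>z\<bar> \<Longrightarrow> (\<lambda>t. x t / z ^ (t + 1)) sums reval X z"
    using assms(1) by blast
  define Z where "Z = {max R 0<..<max R 0 + 1} - {z. poly p z = 0}"
  have "infinite Z"
    unfolding Z_def using assms(2) by (intro Diff_infinite_finite) (auto simp: poly_roots_finite)
  moreover have "z \<noteq> 0 \<and> poly p z \<noteq> 0 \<and> (\<lambda>t. x t / z ^ (t + 1)) sums reval X z" if "z \<in> Z" for z
    using that R[of z] by (auto simp: Z_def)
  ultimately show ?thesis
    by (rule that)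
qed

text \<open>\<open>Z\<close> is an infinite set of points at which the expansion of \<open>X\<close> converges and the
  characteristic polynomial does not vanish; polynomial identities are checked on it.\<close>

locale minimal_recurrence =
  fixes n :: nat and x a :: "nat \<Rightarrow> real" and X :: "real poly fract" and Z :: "real set"
  assumes n_pos: "n \<ge> 1"
    and recur: "\<forall>t. x (t + n) = (\<Sum>i=1..n. a i * x (t + n - i))"
    and minimal: "\<forall>m<n. \<not> (\<exists>c :: nat \<Rightarrow> real.
                       \<forall>t. x (t + m) = (\<Sum>i=1..m. c i * x (t + m - i)))"
    and infinite_Z: "infinite Z"
    and Z: "\<And>z. z \<in> Z \<Longrightarrow>
              z \<noteq> 0 \<and> poly (char_poly a n) z \<noteq> 0 \<and> (\<lambda>t. x t / z ^ (t + 1)) sums reval X z"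
begin

abbreviation Q :: "real poly" where
  "Q \<equiv> char_poly a n"

lemma poly_shift_Q_x: "poly_shift Q x s = 0"
  using recur by (simp add: poly_shift_char_poly)

lemma poly_Q_mult_X: "z \<in> Z \<Longrightarrow> poly Q z * reval X z = poly (init_poly Q x) z"
  using poly_mult_gen_series_eq_init_poly[OF poly_shift_Q_x] Z by blast

lemma X_eq_Fract: "X = Fract (init_poly Q x) Q"
proof -
  obtain p q where pq: "quot_of_fract X = (p, q)"
    by (cases "quot_of_fract X")
  have "q \<noteq> 0" and X: "X = Fract p q"
    using snd_quot_of_fract_nonzero[of X] Fract_quot_of_fract[of X] pq by simp_all
  have "poly (Q * p - init_poly Q x * q) z = 0" if "z \<in> Z - {z. poly q z = 0}" for z
    using poly_Q_mult_X[of z] that by (simp add: reval_def pq field_simps)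
  moreover have "infinite (Z - {z. poly q z = 0})"
    using infinite_Z \<open>q \<noteq> 0\<close> by (simp add: Diff_infinite_finite poly_roots_finite)
  ultimately have "Q * p - init_poly Q x * q = 0"
    using poly_eq_0_if_infinite_roots by blast
  then show ?thesis
    unfolding X using \<open>q \<noteq> 0\<close> by (simp add: eq_fract algebra_simps)
qed

lemma to_fract_Q_mult_X: "to_fract Q * X = to_fract (init_poly Q x)"
  by (simp add: X_eq_Fract to_fract_def eq_fract)

text \<open>If \<open>C X\<close> were a polynomial, the sequence \<open>C(E) x\<close> would have a polynomial generating
  function while still satisfying the recurrence; this forces \<open>C(E) x = 0\<close>, a recurrence of
  order \<open>degree C\<close>.\<close>

lemma poly_mult_X_eq_poly_imp_zero:
  assumes CR: "to_fract C * X = to_fract R" and "degree C < n"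
  shows "C = 0"
proof (rule ccontr)
  assume "C \<noteq> 0"
  define e where "e = poly_shift C x"
  define T where "T = R - init_poly C x"
  have e_annihilated: "poly_shift Q e s = 0" for s
    unfolding e_def poly_shift_commute[of Q] by (simp add: poly_shift_def[of C] poly_shift_Q_x)
  have "C * init_poly Q x = R * Q"
    using CR by (simp add: X_eq_Fract to_fract_def eq_fract)
  then have e_sums: "(\<lambda>t. e t / z ^ (t + 1)) sums poly T z" if "z \<in> Z" for z
  proof -
    have "poly Q z * (poly C z * reval X z) = poly C z * poly (init_poly Q x) z"
      using poly_Q_mult_X[OF that] by (metis mult.left_commute)
    also have "\<dots> = poly Q z * poly R z"
      using arg_cong[OF \<open>C * init_poly Q x = R * Q\<close>, of "\<lambda>p. poly p z"] by (simp add: mult.commute)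
    finally have "poly Q z * (poly C z * reval X z) = poly Q z * poly R z" .
    then have "poly C z * reval X z = poly R z"
      using Z[OF that] by simp
    then show ?thesis
      using sums_poly_shift[of z x "reval X z" C] Z[OF that] by (simp add: e_def T_def)
  qed
  have "poly (Q * T - init_poly Q e) z = 0" if "z \<in> Z" for z
    using poly_mult_gen_series_eq_init_poly[OF e_annihilated _ e_sums] Z that by simp
  then have "Q * T = init_poly Q e"
    using poly_eq_0_if_infinite_roots[OF infinite_Z] by fastforce
  moreover have "degree (init_poly Q e) < n"
    using degree_init_poly_less[of Q e] n_pos by simp
  ultimately have "T = 0"
    by (metis degree_char_poly degree_mult_eq char_poly_neq_0 le_add1 not_le)
  then have "e t = 0" for t
    using gen_series_eq_0_imp_zero[OF infinite_Z _ _ e_annihilated] e_sums Z n_pos by simp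
  then have "\<exists>c. \<forall>t. x (t + degree C) = (\<Sum>i=1..degree C. c i * x (t + degree C - i))"
    using poly_shift_eq_0_imp_recurrence[OF \<open>C \<noteq> 0\<close>] by (simp add: e_def)
  then show False
    using minimal \<open>degree C < n\<close> by blast
qed

lemma to_fract_Q: "to_fract Q = rz ^ n - (\<Sum>i=1..n. rconst (a i) * rz ^ (n - i))"
  by (simp add: char_poly_def rconst_mult_rz_power rz_power[of n])

lemma derivs_const_combination_eq_0_imp:
  assumes "(\<Sum>i=1..n. rconst (c i) * (rderiv ^^ n) (rz ^ (n - i) * X)) = 0"
  shows "\<forall>i\<in>{1..n}. c i = 0"
proof -
  define C where "C = (\<Sum>i=1..n. monom (c i) (n - i))"
  have "(rderiv ^^ n) (to_fract C * X) = (\<Sum>i=1..n. rconst (c i) * (rderiv ^^ n) (rz ^ (n - i) * X))"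
    by (simp add: C_def sum_distrib_right funpow_rderiv_sum mult.assoc
        flip: funpow_rderiv_rconst_mult rconst_mult_rz_power)
  then obtain R where "to_fract C * X = to_fract R"
    using assms funpow_rderiv_eq_0_imp_poly by metis
  moreover have "degree C < n"
  proof -
    have "degree C \<le> n - 1"
      unfolding C_def by (rule degree_sum_le) (auto intro: order.trans[OF degree_monom_le])
    then show ?thesis
      using n_pos by linarith
  qed
  ultimately have "C = 0"
    by (rule poly_mult_X_eq_poly_imp_zero)
  have "coeff C (n - i) = c i" if "i \<in> {1..n}" for i
  proof -
    have "coeff C (n - i) = (\<Sum>j=1..n. if j = i then c j else 0)"
      unfolding C_def coeff_sum using that by (intro sum.cong) auto
    then show ?thesis
      using that by simp
  qed
  then show ?thesis
    using \<open>C = 0\<close> by simp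
qed

lemma funpow_rderiv_recurrence:
  assumes "n \<le> k"
  shows "(rderiv ^^ k) (rz ^ n * X) = (\<Sum>i=1..n. rconst (a i) * (rderiv ^^ k) (rz ^ (n - i) * X))"
proof -
  have "rz ^ n * X - (\<Sum>i=1..n. rconst (a i) * (rz ^ (n - i) * X)) = to_fract (init_poly Q x)"
    by (simp add: to_fract_Q_mult_X[symmetric] to_fract_Q algebra_simps sum_distrib_left)
  then have "(rderiv ^^ k) (rz ^ n * X) - (\<Sum>i=1..n. rconst (a i) * (rderiv ^^ k) (rz ^ (n - i) * X))
      = (rderiv ^^ k) (to_fract (init_poly Q x))"
    unfolding funpow_rderiv_rconst_mult[symmetric] funpow_rderiv_sum[symmetric]
      funpow_rderiv_diff[symmetric] by simp
  also have "\<dots> = 0"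
    using degree_init_poly_less[of Q x] n_pos assms by (intro funpow_rderiv_to_fract_eq_0) simp
  finally show ?thesis
    by simp
qed

lemma derivs_system_eq_0_imp:
  assumes "\<And>\<mu>. \<mu> < n \<Longrightarrow> (\<Sum>i=1..n. \<beta> i * (rderiv ^^ (n + \<mu>)) (rz ^ (n - i) * X)) = 0"
  shows "\<forall>i\<in>{1..n}. \<beta> i = 0"
proof (rule wronskian_indep)
  show "\<forall>c. (\<Sum>i=1..n. rconst (c i) * (rderiv ^^ n) (rz ^ (n - i) * X)) = 0 \<longrightarrow> (\<forall>i\<in>{1..n}. c i = 0)"
    using derivs_const_combination_eq_0_imp by blast
  have "(rderiv ^^ \<mu>) ((rderiv ^^ n) r) = (rderiv ^^ (n + \<mu>)) r" for \<mu> r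
    by (simp add: funpow_add add.commute[of n])
  then show "(\<Sum>i=1..n. \<beta> i * (rderiv ^^ \<mu>) ((rderiv ^^ n) (rz ^ (n - i) * X))) = 0" if "\<mu> < n" for \<mu>
    using assms[OF that] by simp
qed

lemma derivs_system_solution_iff:
  "(\<forall>\<mu>\<le>n. (rderiv ^^ (n + \<mu>)) (rz ^ n * X)
           = (\<Sum>i=1..n. \<alpha> i * (rderiv ^^ (n + \<mu>)) (rz ^ (n - i) * X)))
   \<longleftrightarrow> (\<forall>i\<in>{1..n}. \<alpha> i = rconst (a i))"
proof
  assume solves: "\<forall>\<mu>\<le>n. (rderiv ^^ (n + \<mu>)) (rz ^ n * X)
                    = (\<Sum>i=1..n. \<alpha> i * (rderiv ^^ (n + \<mu>)) (rz ^ (n - i) * X))"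
  have "(\<Sum>i=1..n. (\<alpha> i - rconst (a i)) * (rderiv ^^ (n + \<mu>)) (rz ^ (n - i) * X)) = 0"
    if "\<mu> < n" for \<mu>
    using solves funpow_rderiv_recurrence[of "n + \<mu>"] that
    by (simp add: left_diff_distrib sum_subtractf)
  then show "\<forall>i\<in>{1..n}. \<alpha> i = rconst (a i)"
    using derivs_system_eq_0_imp by fastforce
next
  assume "\<forall>i\<in>{1..n}. \<alpha> i = rconst (a i)"
  then show "\<forall>\<mu>\<le>n. (rderiv ^^ (n + \<mu>)) (rz ^ n * X)
               = (\<Sum>i=1..n. \<alpha> i * (rderiv ^^ (n + \<mu>)) (rz ^ (n - i) * X))"
    using funpow_rderiv_recurrence by simp
qed

lemma derivs_matrix_rank:
  "vec_space.rank (n + 1) (mat (n + 1) (n + 1) (\<lambda>(\<mu>, j). (rderiv ^^ (n + \<mu>)) (rz ^ (n - j) * X))) = n"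
proof -
  interpret V: vec_space "TYPE(real poly fract)" "n + 1" .
  define M where "M = mat (n + 1) (n + 1) (\<lambda>(\<mu>, j). (rderiv ^^ (n + \<mu>)) (rz ^ (n - j) * X))"
  have M: "M \<in> carrier_mat (n + 1) (n + 1)"
    by (simp add: M_def)
  have M_mult: "(M *\<^sub>v v) $ \<mu> = (rderiv ^^ (n + \<mu>)) (rz ^ n * X) * v $ 0
      + (\<Sum>i=1..n. v $ i * (rderiv ^^ (n + \<mu>)) (rz ^ (n - i) * X))"
    if "v \<in> carrier_vec (n + 1)" "\<mu> \<le> n" for v \<mu>
  proof -
    have "(M *\<^sub>v v) $ \<mu> = (\<Sum>j<Suc n. (rderiv ^^ (n + \<mu>)) (rz ^ (n - j) * X) * v $ j)"
      using that by (simp add: M_def scalar_prod_def atLeast0LessThan)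
    also have "\<dots> = (rderiv ^^ (n + \<mu>)) (rz ^ n * X) * v $ 0
        + (\<Sum>i=1..n. v $ i * (rderiv ^^ (n + \<mu>)) (rz ^ (n - i) * X))"
      unfolding sum.lessThan_Suc_shift One_nat_def sum.atLeast1_atMost_eq by (simp add: mult.commute)
    finally show ?thesis .
  qed
  define w where "w = vec (n + 1) (\<lambda>j. if j = 0 then 1 else - rconst (a j))"
  have w: "w \<in> carrier_vec (n + 1)" "w $ 0 \<noteq> 0"
    by (simp_all add: w_def)
  have "M *\<^sub>v w = 0\<^sub>v (n + 1)"
  proof (rule eq_vecI)
    fix \<mu>
    assume "\<mu> < dim_vec (0\<^sub>v (n + 1))"
    then have "\<mu> \<le> n"
      by simp
    have "(\<Sum>i=1..n. w $ i * (rderiv ^^ (n + \<mu>)) (rz ^ (n - i) * X))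
        = - (\<Sum>i=1..n. rconst (a i) * (rderiv ^^ (n + \<mu>)) (rz ^ (n - i) * X))"
      by (simp add: w_def sum_negf)
    then show "(M *\<^sub>v w) $ \<mu> = 0\<^sub>v (n + 1) $ \<mu>"
      using M_mult[OF w(1) \<open>\<mu> \<le> n\<close>] funpow_rderiv_recurrence[of "n + \<mu>"] \<open>\<mu> \<le> n\<close>
      by (simp add: w_def)
  qed (simp add: M_def)
  moreover have "v = 0\<^sub>v (n + 1)"
    if "v \<in> carrier_vec (n + 1)" "v $ 0 = 0" "M *\<^sub>v v = 0\<^sub>v (n + 1)" for v
  proof -
    have "(\<Sum>i=1..n. v $ i * (rderiv ^^ (n + \<mu>)) (rz ^ (n - i) * X)) = 0" if "\<mu> < n" for \<mu>
      using M_mult[of v \<mu>] \<open>v \<in> carrier_vec (n + 1)\<close> \<open>v $ 0 = 0\<close> \<open>M *\<^sub>v v = 0\<^sub>v (n + 1)\<close> that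
      by simp
    then have "\<forall>i\<in>{1..n}. v $ i = 0"
      by (rule derivs_system_eq_0_imp)
    then have "v $ i = 0" if "i \<le> n" for i
      using \<open>v $ 0 = 0\<close> that by (cases i) auto
    then show ?thesis
      using \<open>v \<in> carrier_vec (n + 1)\<close> by (intro eq_vecI) auto
  qed
  ultimately have "V.rank M = n + 1 - 1"
    using V.rank_eq_if_kernel_line[OF M w] by blast
  then show ?thesis
    by (simp add: M_def)
qed

end

theorem corollary1:
  fixes n :: nat and x :: "nat \<Rightarrow> real" and a :: "nat \<Rightarrow> real"
    and X :: "real poly fract"
  assumes n_pos: "n \<ge> 1"
    and recur: "\<forall>t. x (t + n) = (\<Sum>i=1..n. a i * x (t + n - i))"
    and minimal: "\<forall>m<n. \<not> (\<exists>c :: nat \<Rightarrow> real.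
                       \<forall>t. x (t + m) = (\<Sum>i=1..m. c i * x (t + m - i)))"
    and X_expansion: "\<exists>R. \<forall>z::real. R < \<bar>z\<bar> \<longrightarrow>
                       (\<lambda>t. x t / z ^ (t + 1)) sums reval X z"
  shows "vec_space.rank (n + 1)
           (mat (n + 1) (n + 1) (\<lambda>(\<mu>, j). (rderiv ^^ (n + \<mu>)) (rz ^ (n - j) * X))) = n
       \<and> (\<forall>\<alpha> :: nat \<Rightarrow> real poly fract.
            (\<forall>\<mu>\<le>n. (rderiv ^^ (n + \<mu>)) (rz ^ n * X)
                    = (\<Sum>i=1..n. \<alpha> i * (rderiv ^^ (n + \<mu>)) (rz ^ (n - i) * X)))
            \<longleftrightarrow> (\<forall>i\<in>{1..n}. \<alpha> i = rconst (a i)))"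
proof -
  obtain Z where "infinite Z" and
    "\<And>z. z \<in> Z \<Longrightarrow> z \<noteq> 0 \<and> poly (char_poly a n) z \<noteq> 0 \<and> (\<lambda>t. x t / z ^ (t + 1)) sums reval X z"
    using expansion_set_exists[OF X_expansion char_poly_neq_0] by blast
  then interpret minimal_recurrence n x a X Z
    using n_pos recur minimal by unfold_locales
  show ?thesis
    using derivs_matrix_rank derivs_system_solution_iff by blast
qed

end
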